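(* Let $K$ be a Barański sponge in $\mathbb R^d$ and let $\mathbf w,\mathbf w'\in\mathcal D^*$ with $|\mathbf w|=|\mathbf w'|$ be such that $\pi(\mathbf w)-\pi(\mathbf w')$ is a nonzero $0$-$\pm1$ vector. Then $\psi_{\mathbf w}(K)\cap\psi_{\mathbf w'}(K)\ne\varnothing$ if and only if $\pi(\mathbf w)-\pi(\mathbf w')\in\mathcal E_{\,d-|\pi(\mathbf w)-\pi(\mathbf w')|}$.
   Context: Let $d\ge2$, integers $N_1,\dots,N_d\ge2$, probability vectors $(p_{i,1},\dots,p_{i,N_i})$ (positive entries summing to 1), $q_{i,1}=0$, $q_{i,j}=\sum_{\ell<j}p_{i,\ell}$. Let $\mathcal D\subset\{(j_1,\dots,j_d):1\le j_i\le N_i\}$ with $1<|\mathcal D|<\prod_iN_i$; for $w=(j_1,\dots,j_d)\in\mathcal D$, $\psi_w(x_1,\dots,x_d)=(p_{1,j_1}x_1+q_{1,j_1},\dots,p_{d,j_d}x_d+q_{d,j_d})$; $K$ is the unique nonempty compact set with $K=\bigcup_{w\in\mathcal D}\psi_w(K)$. $\mathcal D^*$ is the set of nonempty finite words over $\mathcal D$, $|\mathbf w|$ the length, and $\psi_{w_1\cdots w_k}=\psi_{w_1}\circ\cdots\circ\psi_{w_k}$. Define $\pi_i:\mathcal D^*\to\mathbb Z_{\ge0}$ by $\pi_i((j_1,\dots,j_d))=j_i$ and $\pi_i(\mathbf w w)=N_i\pi_i(\mathbf w)+\pi_i(w)$ for $\mathbf w\in\mathcal D^*,w\in\mathcal D$;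 $\pi(\mathbf w)=(\pi_1(\mathbf w),\dots,\pi_d(\mathbf w))$. A $0$-$\pm1$ vector is $\alpha\in\mathbb Z^d$ with all $|\alpha_i|\le1$, and $|\alpha|=\sum_i|\alpha_i|$. $\mathcal E_0$ is the set of nonzero $0$-$\pm1$ vectors $\alpha$ with $((N_1-1)\alpha_1,\dots,(N_d-1)\alpha_d)\in\mathcal D-\mathcal D$; for $1\le t\le d-1$, $\mathcal E_t$ is the set of nonzero $0$-$\pm1$ vectors $\alpha$ for which there is $e\in\mathcal D-\mathcal D$ with $(N_1\alpha_1,\dots,N_d\alpha_d)+e\in\bigcup_{k=0}^{t-1}\mathcal E_k$. Here $\mathcal D-\mathcal D=\{u-v:u,v\in\mathcal D\}$. *)

theory Defs
  imports "HOL-Analysis.Analysis"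
begin

text \<open>Coordinates are indexed by a finite type 'n with d = CARD('n).
  A digit is a function 'n => nat (the tuple (j_1,...,j_d)), 1-based.\<close>

definition q_sp :: "('n \<Rightarrow> nat \<Rightarrow> real) \<Rightarrow> 'n \<Rightarrow> nat \<Rightarrow> real" where
  "q_sp p i j = (\<Sum>l\<in>{1..<j}. p i l)"

definition psi_digit :: "('n \<Rightarrow> nat \<Rightarrow> real) \<Rightarrow> ('n \<Rightarrow> nat) \<Rightarrow> real^'n \<Rightarrow> real^'n" where
  "psi_digit p w x = (\<chi> i. p i (w i) * x $ i + q_sp p i (w i))"

definition psi_word :: "('n \<Rightarrow> nat \<Rightarrow> real) \<Rightarrow> ('n \<Rightarrow> nat) list \<Rightarrow> real^'n \<Rightarrow> real^'n" where
  "psi_word p ws = foldr (\<lambda>w f. psi_digit p w \<circ> f) ws id"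

definition pi_word :: "('n \<Rightarrow> nat) \<Rightarrow> ('n \<Rightarrow> nat) list \<Rightarrow> 'n \<Rightarrow> int" where
  "pi_word N ws i = foldl (\<lambda>acc w. int (N i) * acc + int (w i)) 0 ws"

definition zpm_vec :: "('n \<Rightarrow> int) \<Rightarrow> bool" where
  "zpm_vec \<alpha> \<longleftrightarrow> (\<forall>i. \<bar>\<alpha> i\<bar> \<le> 1)"

definition zpm_norm :: "('n::finite \<Rightarrow> int) \<Rightarrow> nat" where
  "zpm_norm \<alpha> = (\<Sum>i\<in>UNIV. nat \<bar>\<alpha> i\<bar>)"

definition diff_set :: "('n \<Rightarrow> nat) set \<Rightarrow> ('n \<Rightarrow> int) set" where
  "diff_set D = {(\<lambda>i. int (u i) - int (v i)) | u v. u \<in> D \<and> v \<in> D}"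

fun E_set :: "('n \<Rightarrow> nat) \<Rightarrow> ('n \<Rightarrow> nat) set \<Rightarrow> nat \<Rightarrow> ('n \<Rightarrow> int) set" where
  "E_set N D 0 = {\<alpha>. zpm_vec \<alpha> \<and> (\<exists>i. \<alpha> i \<noteq> 0) \<and> (\<lambda>i. (int (N i) - 1) * \<alpha> i) \<in> diff_set D}"
| "E_set N D (Suc t) = {\<alpha>. zpm_vec \<alpha> \<and> (\<exists>i. \<alpha> i \<noteq> 0) \<and>
     (\<exists>e\<in>diff_set D. (\<lambda>i. int (N i) * \<alpha> i + e i) \<in> (\<Union>k\<le>t. E_set N D k))}"

end

theory Submission
  imports Defs
begin

text \<open>In coordinate i the map \<open>\<psi>\<^sub>w\<close> is \<open>x \<mapsto> P\<^sub>w x + Q\<^sub>w\<close>, and the intervals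
  \<open>[Q\<^sub>w, Q\<^sub>w + P\<^sub>w]\<close> of words of a fixed length tile [0,1] in the order given by \<open>\<pi>\<^sub>i(w)\<close>.
  Since K lies in the unit cube, for a 0-\<open>\<pm>\<close>1 vector \<open>\<alpha> = \<pi>(w) - \<pi>(w')\<close> we get
  \<open>\<psi>\<^sub>w(x) = \<psi>\<^sub>w\<^sub>'(y)\<close> iff \<open>y = x + \<alpha>\<close>, so the two images meet iff K meets \<open>K - \<alpha>\<close>.
  If \<open>x \<in> \<psi>\<^sub>u(K)\<close> and \<open>x + \<alpha> \<in> \<psi>\<^sub>v(K)\<close>, the preimages differ by
  \<open>\<beta> = N\<alpha> + (u - v)\<close>, again a 0-\<open>\<pm>\<close>1 vector agreeing with \<open>\<alpha>\<close> on its support. Either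
  \<open>\<beta> = \<alpha>\<close>, i.e. \<open>(N - 1)\<alpha> = v - u\<close>, or \<open>\<beta>\<close> has strictly larger support, which drives an
  induction on \<open>d - |\<alpha>|\<close>. Conversely the fixed points of \<open>\<psi>\<^sub>u\<close> and \<open>\<psi>\<^sub>v\<close> realise the
  vectors of \<open>\<E>\<^sub>0\<close>, and translates lift along the same relation.\<close>

lemma digit_expansion_eq_0:
  fixes A :: int
  assumes "1 \<le> x" "x \<le> n" "1 \<le> y" "y \<le> n" "int n * A + int x - int y = 0"
  shows "A = 0 \<and> x = y"
proof -
  have "A = 0"
  proof (rule ccontr)
    assume "A \<noteq> 0"
    hence "int n * 1 \<le> int n * \<bar>A\<bar>" by (intro mult_left_mono) auto
    hence "int n \<le> \<bar>int n * A\<bar>" by (simp add: abs_mult)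
    with assms show False by linarith
  qed
  with assms show ?thesis by simp
qed

lemma digit_expansion_eq_1:
  fixes A :: int
  assumes "1 \<le> x" "x \<le> n" "1 \<le> y" "y \<le> n" "int n * A + int x - int y = 1"
  shows "(A = 0 \<and> x = Suc y) \<or> (A = 1 \<and> x = 1 \<and> y = n)"
proof -
  have "A = 0 \<or> A = 1"
  proof (rule ccontr)
    assume "\<not> (A = 0 \<or> A = 1)"
    hence "A \<ge> 2 \<or> A \<le> -1" by auto
    hence "int n * A \<ge> int n * 2 \<or> int n * A \<le> int n * (-1)"
      using mult_left_mono of_nat_0_le_iff by metis
    with assms show False by linarith
  qed
  with assms show ?thesis by auto
qed

lemma shifted_digit_eq:
  fixes a :: int
  assumes "1 \<le> u" "u \<le> n" "1 \<le> v" "v \<le> n" "\<bar>a\<bar> \<le> 1" "a \<noteq> 0"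
    and "\<bar>int n * a + int u - int v\<bar> \<le> 1"
  shows "int n * a + int u - int v = a"
proof -
  have "a = 1 \<or> a = -1" using assms(5,6) by auto
  with assms show ?thesis by auto
qed

lemma q_sp_1 [simp]: "q_sp p i 1 = 0" "q_sp p i (Suc 0) = 0"
  by (simp_all add: q_sp_def)

lemma q_sp_Suc: "1 \<le> j \<Longrightarrow> q_sp p i (Suc j) = q_sp p i j + p i j"
  unfolding q_sp_def by (simp add: atLeastLessThanSuc add.commute)

locale coordinate_weights =
  fixes p :: "'n \<Rightarrow> nat \<Rightarrow> real" and i :: 'n and n :: nat
  assumes n_ge_2: "n \<ge> 2"
    and p_pos: "\<And>j. 1 \<le> j \<Longrightarrow> j \<le> n \<Longrightarrow> p i j > 0"
    and p_sum: "(\<Sum>j=1..n. p i j) = 1"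
begin

abbreviation q :: "nat \<Rightarrow> real" where "q \<equiv> q_sp p i"

lemma q_Suc_n: "q (Suc n) = 1"
  using p_sum unfolding q_sp_def by (simp add: atLeastLessThanSuc_atLeastAtMost)

lemma q_n_add_p_n: "q n + p i n = 1"
  using q_sp_Suc[of n p i] q_Suc_n n_ge_2 by simp

lemma q_strict_mono: "1 \<le> j \<Longrightarrow> j < k \<Longrightarrow> k \<le> Suc n \<Longrightarrow> q j < q k"
proof (induction k)
  case (Suc k)
  have "q j \<le> q k" using Suc by (cases "j < k") (auto simp: less_Suc_eq)
  moreover have "p i k > 0" using Suc p_pos by auto
  ultimately show ?case using Suc q_sp_Suc[of k p i] by simp
qed simp

lemma q_mono: "1 \<le> j \<Longrightarrow> j \<le> k \<Longrightarrow> k \<le> Suc n \<Longrightarrow> q j \<le> q k"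
  using q_strict_mono[of j k] by (cases "j = k") auto

lemma q_nonneg: "j \<le> Suc n \<Longrightarrow> q j \<ge> 0"
  unfolding q_sp_def by (rule sum_nonneg) (auto intro!: less_imp_le[OF p_pos])

lemma q_add_p_le_1: "1 \<le> j \<Longrightarrow> j \<le> n \<Longrightarrow> q j + p i j \<le> 1"
  using q_mono[of "Suc j" "Suc n"] q_sp_Suc[of j p i] q_Suc_n by simp

lemma p_less_1:
  assumes "1 \<le> j" "j \<le> n"
  shows "p i j < 1"
proof (cases "j = 1")
  case True
  have "q 2 < q (Suc n)" using q_strict_mono[of 2 "Suc n"] n_ge_2 by simp
  moreover have "q 2 = p i 1" using q_sp_Suc[of 1 p i] by (simp add: numeral_2_eq_2)
  ultimately show ?thesis using True q_Suc_n by simp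
next
  case False
  hence "q 1 < q j" using q_strict_mono[of 1 j] assms by simp
  then show ?thesis using q_add_p_le_1[OF assms] by simp
qed

lemma interval_point_bounds:
  assumes "1 \<le> u" "u \<le> n" "0 \<le> x" "x \<le> 1"
  shows "q u \<le> q u + p i u * x" "q u + p i u * x \<le> q u + p i u"
  using assms p_pos[of u] by (auto simp: mult_le_cancel_left1)

lemma interval_point_eq_0:
  assumes "1 \<le> u" "u \<le> n" "0 \<le> x" "x \<le> 1" "q u + p i u * x \<le> 0"
  shows "u = 1 \<and> x = 0"
proof -
  have "q u = 0" "p i u * x = 0"
    using interval_point_bounds[OF assms(1-4)] q_nonneg[of u] assms by linarith+
  moreover have "u = 1"
  proof (rule ccontr)
    assume "u \<noteq> 1"
    hence "q 1 < q u" using q_strict_mono[of 1 u] assms by simp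
    with \<open>q u = 0\<close> show False by simp
  qed
  ultimately show ?thesis using p_pos[of u] assms by auto
qed

lemma interval_point_eq_1:
  assumes "1 \<le> v" "v \<le> n" "0 \<le> y" "y \<le> 1" "q v + p i v * y \<ge> 1"
  shows "v = n \<and> y = 1"
proof -
  have "q (Suc v) \<ge> 1" "p i v * y = p i v"
    using interval_point_bounds[OF assms(1-4)] q_add_p_le_1[of v] q_sp_Suc[of v p i] assms
    by linarith+
  moreover have "v = n"
  proof (rule ccontr)
    assume "v \<noteq> n"
    hence "q (Suc v) < q (Suc n)" using q_strict_mono[of "Suc v" "Suc n"] assms by simp
    with \<open>q (Suc v) \<ge> 1\<close> q_Suc_n show False by simp
  qed
  ultimately show ?thesis using p_pos[of v] assms by auto
qed

lemma interval_point_eq_less: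
  assumes "1 \<le> u" "u < v" "v \<le> n" "0 \<le> x" "x \<le> 1" "0 \<le> y" "y \<le> 1"
    and eq: "q u + p i u * x = q v + p i v * y"
  shows "v = Suc u \<and> x = 1 \<and> y = 0"
proof -
  have "q (Suc u) \<le> q v" using q_mono[of "Suc u" v] assms by simp
  hence "q (Suc u) = q v" "p i u * x = p i u" "p i v * y = 0"
    using eq interval_point_bounds[of u x] interval_point_bounds[of v y] q_sp_Suc[of u p i] assms
    by linarith+
  moreover have "v = Suc u"
  proof (rule ccontr)
    assume "v \<noteq> Suc u"
    hence "q (Suc u) < q v" using q_strict_mono[of "Suc u" v] assms by simp
    with \<open>q (Suc u) = q v\<close> show False by simp
  qed
  ultimately show ?thesis using p_pos[of u] p_pos[of v] assms by auto
qed

lemma interval_points_eq_iff: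
  assumes "1 \<le> u" "u \<le> n" "1 \<le> v" "v \<le> n" "0 \<le> x" "x \<le> 1" "0 \<le> y" "y \<le> 1"
  shows "q u + p i u * x = q v + p i v * y \<longleftrightarrow>
    (u = v \<and> x = y) \<or> (u = Suc v \<and> x = 0 \<and> y = 1) \<or> (v = Suc u \<and> x = 1 \<and> y = 0)"
proof
  assume eq: "q u + p i u * x = q v + p i v * y"
  consider "u = v" | "u < v" | "v < u" by arith
  then show "(u = v \<and> x = y) \<or> (u = Suc v \<and> x = 0 \<and> y = 1) \<or> (v = Suc u \<and> x = 1 \<and> y = 0)"
  proof cases
    case 1 then show ?thesis using eq p_pos[of u] assms by simp
  next
    case 2 then show ?thesis using interval_point_eq_less[of u v x y] eq assms by simp
  next
    case 3 then show ?thesis using interval_point_eq_less[of v u y x] eq assms by simp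
  qed
qed (use q_sp_Suc[of u p i] q_sp_Suc[of v p i] assms in auto)

lemma interval_points_unit_gap_iff:
  assumes u: "1 \<le> u" "u \<le> n" and v: "1 \<le> v" "v \<le> n"
    and x: "0 \<le> x" "x \<le> 1" and y: "0 \<le> y" "y \<le> 1"
  shows "q u + p i u * x + 1 = q v + p i v * y \<longleftrightarrow> u = 1 \<and> x = 0 \<and> v = n \<and> y = 1"
proof
  assume eq: "q u + p i u * x + 1 = q v + p i v * y"
  have "q u \<ge> 0" "q v + p i v \<le> 1" using q_nonneg[of u] q_add_p_le_1[OF v] u by auto
  hence "q u + p i u * x \<le> 0" "q v + p i v * y \<ge> 1"
    using eq interval_point_bounds[OF u x] interval_point_bounds[OF v y] by linarith+
  then show "u = 1 \<and> x = 0 \<and> v = n \<and> y = 1"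
    using interval_point_eq_0[OF u x] interval_point_eq_1[OF v y] by blast
qed (use q_n_add_p_n in auto)

text \<open>The carry \<open>n a\<close> accounts for a shift by a whole unit interval from the last digit
  to the first one.\<close>

lemma shifted_interval_points_eq_iff:
  fixes a :: int
  assumes u: "1 \<le> u" "u \<le> n" and v: "1 \<le> v" "v \<le> n"
    and x: "0 \<le> x" "x \<le> 1" and y: "0 \<le> y" "y \<le> 1" and a: "\<bar>a\<bar> \<le> 1"
  defines "b \<equiv> int n * a + int u - int v"
  shows "q u + p i u * x + of_int a = q v + p i v * y \<longleftrightarrow> \<bar>b\<bar> \<le> 1 \<and> y = x + of_int b"
proof -
  consider "a = 1" | "a = -1" | "a = 0" using a by linarith
  then show ?thesis
  proof cases
    case 1
    have "\<bar>b\<bar> \<le> 1 \<and> y = x + of_int b \<longleftrightarrow> u = 1 \<and> x = 0 \<and> v = n \<and> y = 1"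
      using 1 u v x y by (auto simp: b_def)
    then show ?thesis using 1 interval_points_unit_gap_iff[OF u v x y] by simp
  next
    case 2
    have "q u + p i u * x - 1 = q v + p i v * y \<longleftrightarrow> q v + p i v * y + 1 = q u + p i u * x"
      by linarith
    moreover have "\<bar>b\<bar> \<le> 1 \<and> y = x + of_int b \<longleftrightarrow> v = 1 \<and> y = 0 \<and> u = n \<and> x = 1"
      using 2 u v x y by (auto simp: b_def)
    ultimately show ?thesis using 2 interval_points_unit_gap_iff[OF v u y x] by simp
  next
    case 3
    have "\<bar>b\<bar> \<le> 1 \<and> y = x + of_int b \<longleftrightarrow>
        (u = v \<and> x = y) \<or> (u = Suc v \<and> x = 0 \<and> y = 1) \<or> (v = Suc u \<and> x = 1 \<and> y = 0)"
      using 3 u v x y by (auto simp: b_def)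
    then show ?thesis using 3 interval_points_eq_iff[OF u v x y] by simp
  qed
qed

end

definition word_scale :: "('n \<Rightarrow> nat \<Rightarrow> real) \<Rightarrow> ('n \<Rightarrow> nat) list \<Rightarrow> 'n \<Rightarrow> real" where
  "word_scale p ws i = (\<Prod>w\<leftarrow>ws. p i (w i))"

definition word_offset :: "('n \<Rightarrow> nat \<Rightarrow> real) \<Rightarrow> ('n \<Rightarrow> nat) list \<Rightarrow> 'n \<Rightarrow> real" where
  "word_offset p ws i = foldr (\<lambda>w c. p i (w i) * c + q_sp p i (w i)) ws 0"

lemma psi_word_nth: "psi_word p ws x $ i = word_scale p ws i * x $ i + word_offset p ws i"
  unfolding psi_word_def word_scale_def word_offset_def
  by (induction ws) (auto simp: psi_digit_def algebra_simps)

lemma word_scale_snoc: "word_scale p (ws @ [w]) i = word_scale p ws i * p i (w i)"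
  by (simp add: word_scale_def)

lemma word_offset_snoc:
  "word_offset p (ws @ [w]) i = word_offset p ws i + word_scale p ws i * q_sp p i (w i)"
  unfolding word_offset_def word_scale_def by (induction ws) (simp_all add: algebra_simps)

lemma word_scale_pos: "(\<And>w. w \<in> set ws \<Longrightarrow> p i (w i) > 0) \<Longrightarrow> word_scale p ws i > 0"
  unfolding word_scale_def by (induction ws) auto

lemma pi_word_snoc: "pi_word N (ws @ [w]) i = int (N i) * pi_word N ws i + int (w i)"
  by (simp add: pi_word_def)

lemma scaled_adjacent_eq_iff:
  fixes P P' x y :: real
  assumes "P > 0" "P' > 0" "0 \<le> x" "x \<le> 1" "0 \<le> y" "y \<le> 1"
  shows "P * x + P' = P' * y \<longleftrightarrow> y = x + 1"
proof
  assume h: "P * x + P' = P' * y"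
  have "P * x \<ge> 0" "P' * y \<le> P'" using assms by (auto simp: mult_le_cancel_left1)
  hence "P * x = 0" "P' * y = P'" using h by linarith+
  thus "y = x + 1" using assms by simp
qed (use assms in auto)

definition of_int_vec :: "('n::finite \<Rightarrow> int) \<Rightarrow> real^'n" where
  "of_int_vec \<alpha> = (\<chi> i. of_int (\<alpha> i))"

lemma zpm_vec_cases: "zpm_vec \<alpha> \<Longrightarrow> \<alpha> i = 1 \<or> \<alpha> i = -1 \<or> \<alpha> i = 0"
  unfolding zpm_vec_def by (drule spec[of _ i]) auto

lemma zpm_norm_le_card: "zpm_vec (\<alpha> :: 'n::finite \<Rightarrow> int) \<Longrightarrow> zpm_norm \<alpha> \<le> CARD('n)"
  using sum_mono[of UNIV "\<lambda>i. nat \<bar>\<alpha> i\<bar>" "\<lambda>_. 1"]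
  by (simp add: zpm_norm_def zpm_vec_def nat_le_iff)

lemma zpm_norm_less:
  assumes "\<And>i. \<alpha> i \<noteq> 0 \<Longrightarrow> \<beta> i = \<alpha> i" and "\<beta> \<noteq> \<alpha>"
  shows "zpm_norm \<alpha> < zpm_norm \<beta>"
  unfolding zpm_norm_def
proof (rule sum_strict_mono_ex1)
  show "\<forall>i\<in>UNIV. nat \<bar>\<alpha> i\<bar> \<le> nat \<bar>\<beta> i\<bar>" using assms(1) by (metis abs_0 nat_0 order_refl zero_le)
  obtain j where "\<beta> j \<noteq> \<alpha> j" using assms(2) by blast
  hence "\<alpha> j = 0" "\<beta> j \<noteq> 0" using assms(1) by auto
  thus "\<exists>i\<in>UNIV. nat \<bar>\<alpha> i\<bar> < nat \<bar>\<beta> i\<bar>" by auto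
qed simp

lemma E_set_zpm: "\<alpha> \<in> E_set N D t \<Longrightarrow> zpm_vec \<alpha> \<and> (\<exists>i. \<alpha> i \<noteq> 0)"
  by (cases t) auto

text \<open>A vector of \<open>\<E>\<^sub>0\<close> is its own successor: \<open>N\<alpha> + (v - u) = \<alpha>\<close> when \<open>(N - 1)\<alpha> = u - v\<close>.\<close>

lemma E_set_0_subset: "E_set N D 0 \<subseteq> E_set N D t"
proof (cases t)
  case (Suc s)
  show ?thesis
  proof
    fix \<alpha> assume \<alpha>: "\<alpha> \<in> E_set N D 0"
    then obtain u v where uv: "u \<in> D" "v \<in> D"
      and e: "\<And>i. (int (N i) - 1) * \<alpha> i = int (u i) - int (v i)"
      by (auto simp: diff_set_def fun_eq_iff)
    have "(\<lambda>i. int (v i) - int (u i)) \<in> diff_set D" using uv by (auto simp: diff_set_def)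
    moreover have "(\<lambda>i. int (N i) * \<alpha> i + (int (v i) - int (u i))) = \<alpha>"
      using e by (simp add: fun_eq_iff algebra_simps)
    moreover have "\<alpha> \<in> (\<Union>k\<le>s. E_set N D k)" using \<alpha> by blast
    ultimately show "\<alpha> \<in> E_set N D t" using \<alpha> Suc by (auto intro!: bexI)
  qed
qed simp

lemma E_set_mono: "s \<le> t \<Longrightarrow> E_set N D s \<subseteq> E_set N D t"
proof (cases s)
  case 0 then show ?thesis using E_set_0_subset by simp
next
  case (Suc s')
  assume "s \<le> t"
  then obtain t' where "t = Suc t'" "s' \<le> t'" using Suc by (cases t) auto
  then show ?thesis using Suc by fastforce
qed

lemma norm_scale_components_less:
  fixes z :: "real^'n"
  assumes c: "\<And>i. \<bar>c i\<bar> < 1" and "z \<noteq> 0"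
  shows "norm (\<chi> i. c i * z $ i) < norm z"
proof -
  obtain j where j: "z $ j \<noteq> 0" using assms(2) by (auto simp: vec_eq_iff)
  have "(\<Sum>i\<in>UNIV. (c i)\<^sup>2 * (z $ i)\<^sup>2) < (\<Sum>i\<in>UNIV. (z $ i)\<^sup>2)"
  proof (rule sum_strict_mono_ex1)
    have "(c i)\<^sup>2 < 1" for i using c[of i] by (simp add: abs_square_less_1)
    then show "\<forall>i\<in>UNIV. (c i)\<^sup>2 * (z $ i)\<^sup>2 \<le> (z $ i)\<^sup>2"
      by (intro ballI mult_left_le_one_le) (auto simp: less_imp_le)
    have "(c j)\<^sup>2 * (z $ j)\<^sup>2 < 1 * (z $ j)\<^sup>2"
      using \<open>(c j)\<^sup>2 < 1\<close> j by (intro mult_strict_right_mono) auto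
    then show "\<exists>i\<in>UNIV. (c i)\<^sup>2 * (z $ i)\<^sup>2 < (z $ i)\<^sup>2" by auto
  qed simp
  hence "(norm (\<chi> i. c i * z $ i))\<^sup>2 < (norm z)\<^sup>2"
    by (simp add: power2_norm_eq_inner inner_vec_def power_mult_distrib flip: power2_eq_square)
  thus ?thesis by (rule power_less_imp_less_base) simp
qed

locale baranski_sponge =
  fixes N :: "'n::finite \<Rightarrow> nat" and p :: "'n \<Rightarrow> nat \<Rightarrow> real"
    and D :: "('n \<Rightarrow> nat) set" and K :: "(real^'n) set"
  assumes N_ge_2: "\<And>i. N i \<ge> 2"
    and p_pos: "\<And>i j. 1 \<le> j \<Longrightarrow> j \<le> N i \<Longrightarrow> p i j > 0"
    and p_sum: "\<And>i. (\<Sum>j=1..N i. p i j) = 1"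
    and D_digits: "D \<subseteq> {u. \<forall>i. 1 \<le> u i \<and> u i \<le> N i}"
    and K_compact: "compact K" and K_nonempty: "K \<noteq> {}"
    and K_invariant: "K = (\<Union>u\<in>D. psi_digit p u ` K)"
begin

lemma coordinate_weights: "coordinate_weights p i (N i)"
  using N_ge_2 p_pos p_sum by unfold_locales auto

lemma digit_range: "u \<in> D \<Longrightarrow> 1 \<le> u i \<and> u i \<le> N i"
  using D_digits by auto

lemma psi_digit_in_K: "u \<in> D \<Longrightarrow> x \<in> K \<Longrightarrow> psi_digit p u x \<in> K"
  using K_invariant by blast

lemma K_cases:
  assumes "x \<in> K"
  obtains u y where "u \<in> D" "y \<in> K" "x = psi_digit p u y"
  using assms K_invariant by blast

lemma digit_weight_bounds: "u \<in> D \<Longrightarrow> 0 < p i (u i) \<and> p i (u i) < 1"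
  using p_pos[of "u i" i] coordinate_weights.p_less_1[OF coordinate_weights, of "u i" i]
    digit_range[of u i] by auto

text \<open>Compare a point where a coordinate is extremal with its preimage under the
  contracting map \<open>x \<mapsto> p x + q\<close>, whose fixed point \<open>q / (1 - p)\<close> lies in [0,1].\<close>

lemma K_nth_le_1:
  assumes "x \<in> K" shows "x $ i \<le> 1"
proof -
  obtain m where m: "m \<in> K" "\<forall>y\<in>K. y $ i \<le> m $ i"
    using continuous_attains_sup[OF K_compact K_nonempty, of "\<lambda>x. x $ i"]
      continuous_on_component[OF continuous_on_id, of K i] by auto
  obtain u y where u: "u \<in> D" "y \<in> K" "m = psi_digit p u y" using K_cases[OF m(1)] by blast
  define a where "a = p i (u i)"
  have a: "0 < a" "a < 1" using digit_weight_bounds[OF u(1)] by (auto simp: a_def)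
  have "m $ i = a * y $ i + q_sp p i (u i)" using u(3) by (simp add: psi_digit_def a_def)
  also have "\<dots> \<le> a * m $ i + (1 - a)"
    using m u a coordinate_weights.q_add_p_le_1[OF coordinate_weights] digit_range[OF u(1)]
    by (intro add_mono mult_left_mono) (auto simp: a_def algebra_simps)
  finally have "(1 - a) * m $ i \<le> (1 - a) * 1" by (simp add: algebra_simps)
  hence "m $ i \<le> 1" using a by (simp add: mult_le_cancel_left)
  thus ?thesis using m assms by force
qed

lemma K_nth_ge_0:
  assumes "x \<in> K" shows "x $ i \<ge> 0"
proof -
  obtain m where m: "m \<in> K" "\<forall>y\<in>K. m $ i \<le> y $ i"
    using continuous_attains_inf[OF K_compact K_nonempty, of "\<lambda>x. x $ i"]
      continuous_on_component[OF continuous_on_id, of K i] by auto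
  obtain u y where u: "u \<in> D" "y \<in> K" "m = psi_digit p u y" using K_cases[OF m(1)] by blast
  define a where "a = p i (u i)"
  have a: "0 < a" "a < 1" using digit_weight_bounds[OF u(1)] by (auto simp: a_def)
  have "a * m $ i \<le> a * y $ i" using m u a by (intro mult_left_mono) auto
  also have "\<dots> \<le> m $ i"
    using u(3) coordinate_weights.q_nonneg[OF coordinate_weights, of "u i" i] digit_range[OF u(1), of i]
    by (simp add: psi_digit_def a_def)
  finally have "(1 - a) * m $ i \<ge> (1 - a) * 0" by (simp add: algebra_simps)
  hence "m $ i \<ge> 0" using a by (simp add: zero_le_mult_iff)
  thus ?thesis using m assms by force
qed

lemma K_in_unit_cube: "x \<in> K \<Longrightarrow> 0 \<le> x $ i \<and> x $ i \<le> 1"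
  using K_nth_le_1 K_nth_ge_0 by auto

lemma dist_psi_digit_less:
  assumes "u \<in> D" "x \<noteq> y"
  shows "dist (psi_digit p u x) (psi_digit p u y) < dist x y"
proof -
  have "psi_digit p u x - psi_digit p u y = (\<chi> i. p i (u i) * (x - y) $ i)"
    by (simp add: psi_digit_def vec_eq_iff algebra_simps)
  moreover have "\<bar>p i (u i)\<bar> < 1" for i using digit_weight_bounds[OF assms(1), of i] by auto
  ultimately show ?thesis
    using norm_scale_components_less[of "\<lambda>i. p i (u i)" "x - y"] assms(2) by (simp add: dist_norm)
qed

text \<open>A nearest point of K to the fixed point would be moved strictly closer by \<open>\<psi>\<^sub>u\<close>.\<close>

lemma fixpoint_in_K:
  assumes u: "u \<in> D" and f: "psi_digit p u f = f"
  shows "f \<in> K"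
proof (rule ccontr)
  assume "f \<notin> K"
  obtain k where k: "k \<in> K" "\<forall>y\<in>K. dist f k \<le> dist f y"
    using continuous_attains_inf[OF K_compact K_nonempty, of "dist f"]
      continuous_on_dist[OF continuous_on_const continuous_on_id, of K f] by auto
  have "dist (psi_digit p u f) (psi_digit p u k) < dist f k"
    using \<open>f \<notin> K\<close> k(1) by (intro dist_psi_digit_less[OF u]) auto
  moreover have "dist f k \<le> dist f (psi_digit p u k)" using k psi_digit_in_K[OF u k(1)] by auto
  ultimately show False using f by simp
qed

definition digit_fixpoint :: "('n \<Rightarrow> nat) \<Rightarrow> real^'n" where
  "digit_fixpoint u = (\<chi> i. q_sp p i (u i) / (1 - p i (u i)))"

lemma digit_fixpoint_in_K: "u \<in> D \<Longrightarrow> digit_fixpoint u \<in> K"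
proof (rule fixpoint_in_K)
  assume u: "u \<in> D"
  have "1 - p i (u i) \<noteq> 0" for i using digit_weight_bounds[OF u, of i] by simp
  then show "psi_digit p u (digit_fixpoint u) = digit_fixpoint u"
    by (simp add: psi_digit_def digit_fixpoint_def vec_eq_iff field_simps)
qed

lemma E_set_0_imp_translate:
  assumes "\<alpha> \<in> E_set N D 0"
  shows "\<exists>x\<in>K. x + of_int_vec \<alpha> \<in> K"
proof -
  obtain u v where uv: "u \<in> D" "v \<in> D"
    and e: "\<And>i. (int (N i) - 1) * \<alpha> i = int (u i) - int (v i)"
    using assms by (auto simp: diff_set_def fun_eq_iff)
  have "digit_fixpoint v + of_int_vec \<alpha> = digit_fixpoint u"
    unfolding vec_eq_iff
  proof
    fix i
    interpret coordinate_weights p i "N i" by (rule coordinate_weights)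
    have u: "1 \<le> u i" "u i \<le> N i" and v: "1 \<le> v i" "v i \<le> N i" using digit_range uv by auto
    have pN: "1 - p i (N i) \<noteq> 0" using p_less_1[of "N i"] n_ge_2 by simp
    consider "\<alpha> i = 1" | "\<alpha> i = -1" | "\<alpha> i = 0"
      using assms zpm_vec_cases[of \<alpha> i] by auto
    then show "(digit_fixpoint v + of_int_vec \<alpha>) $ i = digit_fixpoint u $ i"
    proof cases
      case 1
      hence "u i = N i" "v i = 1" using e[of i] u v by auto
      thus ?thesis using 1 q_n_add_p_n pN by (simp add: digit_fixpoint_def of_int_vec_def)
    next
      case 2
      hence "u i = 1" "v i = N i" using e[of i] u v by auto
      thus ?thesis using 2 q_n_add_p_n pN by (simp add: digit_fixpoint_def of_int_vec_def)
    next
      case 3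
      hence "u i = v i" using e[of i] by simp
      thus ?thesis using 3 by (simp add: digit_fixpoint_def of_int_vec_def)
    qed
  qed
  thus ?thesis using digit_fixpoint_in_K uv by metis
qed

lemma psi_digit_translate_iff:
  assumes "u \<in> D" "v \<in> D" "zpm_vec \<alpha>" "x \<in> K" "y \<in> K"
  defines "\<beta> \<equiv> \<lambda>i. int (N i) * \<alpha> i + int (u i) - int (v i)"
  shows "psi_digit p u x + of_int_vec \<alpha> = psi_digit p v y \<longleftrightarrow>
    zpm_vec \<beta> \<and> y = x + of_int_vec \<beta>"
proof -
  have "(psi_digit p u x + of_int_vec \<alpha>) $ i = psi_digit p v y $ i \<longleftrightarrow>
      \<bar>\<beta> i\<bar> \<le> 1 \<and> y $ i = x $ i + of_int (\<beta> i)" for i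
    using coordinate_weights.shifted_interval_points_eq_iff[OF coordinate_weights,
        of "u i" i "v i" "x $ i" "y $ i" "\<alpha> i"]
      digit_range[of u i] digit_range[of v i] K_in_unit_cube[of x i] K_in_unit_cube[of y i] assms
    by (simp add: psi_digit_def of_int_vec_def zpm_vec_def algebra_simps)
  then show ?thesis by (auto simp: vec_eq_iff zpm_vec_def of_int_vec_def)
qed

lemma E_set_imp_translate: "\<alpha> \<in> E_set N D t \<Longrightarrow> \<exists>x\<in>K. x + of_int_vec \<alpha> \<in> K"
proof (induction t arbitrary: \<alpha>)
  case 0
  then show ?case by (rule E_set_0_imp_translate)
next
  case (Suc t)
  then obtain u v k where uv: "u \<in> D" "v \<in> D" and \<alpha>: "zpm_vec \<alpha>" and "k \<le> t"
    and \<beta>: "(\<lambda>i. int (N i) * \<alpha> i + (int (u i) - int (v i))) \<in> E_set N D k"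
    by (auto simp: diff_set_def)
  define \<beta> where "\<beta> = (\<lambda>i. int (N i) * \<alpha> i + int (u i) - int (v i))"
  have "\<beta> \<in> E_set N D t" using \<beta> E_set_mono[OF \<open>k \<le> t\<close>] by (auto simp: \<beta>_def algebra_simps)
  then obtain x where x: "x \<in> K" "x + of_int_vec \<beta> \<in> K" using Suc.IH by blast
  have "psi_digit p u x + of_int_vec \<alpha> = psi_digit p v (x + of_int_vec \<beta>)"
    using psi_digit_translate_iff[OF uv \<alpha> x] E_set_zpm[OF \<open>\<beta> \<in> E_set N D t\<close>]
    by (simp add: \<beta>_def)
  then show ?case using psi_digit_in_K uv x by metis
qed

lemma translate_imp_E_set:
  assumes "zpm_vec \<alpha>" "\<exists>i. \<alpha> i \<noteq> 0" "x \<in> K" "x + of_int_vec \<alpha> \<in> K"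
  shows "\<alpha> \<in> E_set N D (CARD('n) - zpm_norm \<alpha>)"
  using assms
proof (induction "CARD('n) - zpm_norm \<alpha>" arbitrary: \<alpha> x rule: less_induct)
  case less
  obtain u x' where u: "u \<in> D" "x' \<in> K" "x = psi_digit p u x'" using K_cases[OF less.prems(3)] .
  obtain v y' where v: "v \<in> D" "y' \<in> K" "x + of_int_vec \<alpha> = psi_digit p v y'"
    using K_cases[OF less.prems(4)] .
  define \<beta> where "\<beta> = (\<lambda>i. int (N i) * \<alpha> i + int (u i) - int (v i))"
  have \<beta>: "zpm_vec \<beta>" "y' = x' + of_int_vec \<beta>"
    using psi_digit_translate_iff[OF u(1) v(1) less.prems(1) u(2) v(2)] u(3) v(3)
    by (simp_all add: \<beta>_def)
  have agree: "\<beta> i = \<alpha> i" if "\<alpha> i \<noteq> 0" for i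
    using shifted_digit_eq[of "u i" "N i" "v i" "\<alpha> i"] digit_range u(1) v(1) that less.prems(1) \<beta>(1)
    by (simp add: \<beta>_def zpm_vec_def)
  show ?case
  proof (cases "\<beta> = \<alpha>")
    case True
    hence "(\<lambda>i. (int (N i) - 1) * \<alpha> i) = (\<lambda>i. int (v i) - int (u i))"
      by (auto simp: \<beta>_def fun_eq_iff algebra_simps)
    hence "\<alpha> \<in> E_set N D 0" using less.prems u v by (auto simp: diff_set_def)
    then show ?thesis using E_set_0_subset by blast
  next
    case False
    have "zpm_norm \<alpha> < zpm_norm \<beta>" using zpm_norm_less agree False by blast
    moreover have "zpm_norm \<beta> \<le> CARD('n)" using zpm_norm_le_card[OF \<beta>(1)] .
    ultimately have less_m: "CARD('n) - zpm_norm \<beta> < CARD('n) - zpm_norm \<alpha>" by linarith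
    have "\<exists>i. \<beta> i \<noteq> 0" using agree less.prems(2) by metis
    hence "\<beta> \<in> E_set N D (CARD('n) - zpm_norm \<beta>)"
      using less.hyps[OF less_m \<beta>(1)] u(2) v(2) \<beta>(2) by blast
    moreover obtain t where "CARD('n) - zpm_norm \<alpha> = Suc t"
      using less_m by (cases "CARD('n) - zpm_norm \<alpha>") auto
    moreover have "(\<lambda>i. int (u i) - int (v i)) \<in> diff_set D" using u v by (auto simp: diff_set_def)
    ultimately show ?thesis using less_m less.prems(1,2)
      by (auto simp: \<beta>_def algebra_simps intro!: bexI[of _ "\<lambda>i. int (u i) - int (v i)"])
  qed
qed

lemma sponge_translate_iff_E_set:
  assumes "zpm_vec \<alpha>" "\<exists>i. \<alpha> i \<noteq> 0"
  shows "(\<exists>x\<in>K. x + of_int_vec \<alpha> \<in> K) \<longleftrightarrow> \<alpha> \<in> E_set N D (CARD('n) - zpm_norm \<alpha>)"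
  using translate_imp_E_set[OF assms] E_set_imp_translate by blast

lemma word_coords_eq_if_pi_eq:
  "length s = length s' \<Longrightarrow> set s \<subseteq> D \<Longrightarrow> set s' \<subseteq> D \<Longrightarrow> pi_word N s i = pi_word N s' i \<Longrightarrow>
    word_scale p s i = word_scale p s' i \<and> word_offset p s i = word_offset p s' i"
proof (induction s s' rule: rev_induct2)
  case (4 x xs y ys)
  have digits: "1 \<le> x i" "x i \<le> N i" "1 \<le> y i" "y i \<le> N i"
    using digit_range "4.prems"(2,3) by auto
  have "int (N i) * (pi_word N xs i - pi_word N ys i) + int (x i) - int (y i) = 0"
    using "4.prems"(4) by (simp add: pi_word_snoc algebra_simps)
  from digit_expansion_eq_0[OF digits this]
  have "pi_word N xs i = pi_word N ys i" "x i = y i" by simp_all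
  then show ?case using "4.IH" "4.prems" by (simp add: word_scale_snoc word_offset_snoc)
qed (simp_all add: pi_word_def)

text \<open>In the carry case \<open>x i = 1\<close>, \<open>y i = N i\<close> the gap is closed by \<open>q\<^sub>N + p\<^sub>N = 1\<close>.\<close>

lemma word_offset_eq_if_pi_Suc:
  "length s = length s' \<Longrightarrow> set s \<subseteq> D \<Longrightarrow> set s' \<subseteq> D \<Longrightarrow> pi_word N s i = pi_word N s' i + 1 \<Longrightarrow>
    word_offset p s i = word_offset p s' i + word_scale p s' i"
proof (induction s s' rule: rev_induct2)
  case (4 x xs y ys)
  interpret coordinate_weights p i "N i" by (rule coordinate_weights)
  have digits: "1 \<le> x i" "x i \<le> N i" "1 \<le> y i" "y i \<le> N i"
    using digit_range "4.prems"(2,3) by auto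
  have "int (N i) * (pi_word N xs i - pi_word N ys i) + int (x i) - int (y i) = 1"
    using "4.prems"(4) by (simp add: pi_word_snoc algebra_simps)
  from digit_expansion_eq_1[OF digits this]
  have "(pi_word N xs i = pi_word N ys i \<and> x i = Suc (y i)) \<or>
      (pi_word N xs i = pi_word N ys i + 1 \<and> x i = 1 \<and> y i = N i)"
    by auto
  then show ?case
  proof
    assume "pi_word N xs i = pi_word N ys i \<and> x i = Suc (y i)"
    with word_coords_eq_if_pi_eq[of xs ys] "4.prems" show ?thesis
      using q_sp_Suc[of "y i" p i] digit_range[of y i]
      by (simp add: word_scale_snoc word_offset_snoc algebra_simps)
  next
    assume "pi_word N xs i = pi_word N ys i + 1 \<and> x i = 1 \<and> y i = N i"
    with "4.IH" "4.prems" show ?thesis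
      using q_n_add_p_n by (simp add: word_scale_snoc word_offset_snoc flip: distrib_left)
  qed
qed (simp_all add: pi_word_def)

lemma psi_word_eq_iff_translate:
  assumes "set w \<subseteq> D" "set w' \<subseteq> D" "length w = length w'"
    and \<alpha>: "zpm_vec \<alpha>" and \<alpha>_def: "\<alpha> = (\<lambda>i. pi_word N w i - pi_word N w' i)"
    and "x \<in> K" "y \<in> K"
  shows "psi_word p w x = psi_word p w' y \<longleftrightarrow> y = x + of_int_vec \<alpha>"
  unfolding vec_eq_iff
proof (intro iff_allI)
  fix i
  have S: "word_scale p w i > 0" "word_scale p w' i > 0"
    using assms(1,2) digit_weight_bounds by (auto intro!: word_scale_pos)
  have x: "0 \<le> x $ i" "x $ i \<le> 1" and y: "0 \<le> y $ i" "y $ i \<le> 1"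
    using K_in_unit_cube assms(6,7) by auto
  let ?S = "word_scale p w i" and ?S' = "word_scale p w' i"
    and ?O = "word_offset p w i" and ?O' = "word_offset p w' i"
  consider "\<alpha> i = 1" | "\<alpha> i = -1" | "\<alpha> i = 0" using zpm_vec_cases[OF \<alpha>] by blast
  then have "?S * x $ i + ?O = ?S' * y $ i + ?O' \<longleftrightarrow> y $ i = x $ i + of_int (\<alpha> i)"
  proof cases
    case 1
    hence "?O = ?O' + ?S'" using word_offset_eq_if_pi_Suc[OF assms(3,1,2)] \<alpha>_def by simp
    hence "?S * x $ i + ?O = ?S' * y $ i + ?O' \<longleftrightarrow> ?S * x $ i + ?S' = ?S' * y $ i" by linarith
    with 1 show ?thesis using scaled_adjacent_eq_iff[OF S x y] by simp
  next
    case 2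
    hence "?O' = ?O + ?S" using word_offset_eq_if_pi_Suc[OF assms(3)[symmetric] assms(2,1)] \<alpha>_def
      by simp
    hence "?S * x $ i + ?O = ?S' * y $ i + ?O' \<longleftrightarrow> ?S' * y $ i + ?S = ?S * x $ i" by linarith
    with 2 show ?thesis using scaled_adjacent_eq_iff[OF S(2,1) y x] by auto
  next
    case 3
    hence "?S = ?S'" "?O = ?O'" using word_coords_eq_if_pi_eq[OF assms(3,1,2)] \<alpha>_def by simp_all
    with 3 show ?thesis using S by auto
  qed
  then show "psi_word p w x $ i = psi_word p w' y $ i \<longleftrightarrow> y $ i = (x + of_int_vec \<alpha>) $ i"
    by (simp add: psi_word_nth of_int_vec_def)
qed

lemma psi_word_images_meet_iff:
  assumes "set w \<subseteq> D" "set w' \<subseteq> D" "length w = length w'"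
    and "zpm_vec \<alpha>" "\<alpha> = (\<lambda>i. pi_word N w i - pi_word N w' i)"
  shows "psi_word p w ` K \<inter> psi_word p w' ` K \<noteq> {} \<longleftrightarrow> (\<exists>x\<in>K. x + of_int_vec \<alpha> \<in> K)"
proof
  assume "psi_word p w ` K \<inter> psi_word p w' ` K \<noteq> {}"
  then obtain x y where "x \<in> K" "y \<in> K" "psi_word p w x = psi_word p w' y" by blast
  then show "\<exists>x\<in>K. x + of_int_vec \<alpha> \<in> K" using psi_word_eq_iff_translate[OF assms] by metis
next
  assume "\<exists>x\<in>K. x + of_int_vec \<alpha> \<in> K"
  then obtain x where "x \<in> K" "x + of_int_vec \<alpha> \<in> K" by blast
  then show "psi_word p w ` K \<inter> psi_word p w' ` K \<noteq> {}"
    using psi_word_eq_iff_translate[OF assms] by blast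
qed

end

theorem mainTheorem20:
  fixes N :: "'n::finite \<Rightarrow> nat"
    and p :: "'n \<Rightarrow> nat \<Rightarrow> real"
    and D :: "('n \<Rightarrow> nat) set"
    and K :: "(real^'n) set"
    and w w' :: "('n \<Rightarrow> nat) list"
  assumes d2: "CARD('n) \<ge> 2"
    and N2: "\<And>i. N i \<ge> 2"
    and ppos: "\<And>i j. 1 \<le> j \<Longrightarrow> j \<le> N i \<Longrightarrow> p i j > 0"
    and psum: "\<And>i. (\<Sum>j=1..N i. p i j) = 1"
    and Dsub: "D \<subseteq> {u. \<forall>i. 1 \<le> u i \<and> u i \<le> N i}"
    and Dcard: "1 < card D" "card D < (\<Prod>i\<in>UNIV. N i)"
    and Kcomp: "compact K" and Kne: "K \<noteq> {}"
    and Kfix: "K = (\<Union>u\<in>D. psi_digit p u ` K)"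
    and wD: "w \<noteq> []" "set w \<subseteq> D"
    and w'D: "w' \<noteq> []" "set w' \<subseteq> D"
    and len: "length w = length w'"
    and zpm: "zpm_vec (\<lambda>i. pi_word N w i - pi_word N w' i)"
    and nz: "\<exists>i. pi_word N w i \<noteq> pi_word N w' i"
  shows "psi_word p w ` K \<inter> psi_word p w' ` K \<noteq> {} \<longleftrightarrow>
    (\<lambda>i. pi_word N w i - pi_word N w' i)
      \<in> E_set N D (CARD('n) - zpm_norm (\<lambda>i. pi_word N w i - pi_word N w' i))"
proof -
  interpret baranski_sponge N p D K
    using N2 ppos psum Dsub Kcomp Kne Kfix by unfold_locales
  have "\<exists>i. pi_word N w i - pi_word N w' i \<noteq> 0" using nz by simp
  from sponge_translate_iff_E_set[OF zpm this]
  show ?thesis unfolding psi_word_images_meet_iff[OF wD(2) w'D(2) len zpm refl] .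
qed

end
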